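(* Suppose that for every agent $i$ and every date $n$, $u_{in}$ is twice continuously differentiable on $\mathbb R_{++}$ with $u_{in}'>0$, $u_{in}''<0$ and $\lim_{x\to0}u_{in}'(x)=+\infty$, and let $(\bar p,\bar x)$ be a competitive equilibrium of $\mathcal E^{N,\beta}$. Suppose $q=\alpha\bar p+u$ with $\alpha\in\mathbb R$ and $\Psi(u)=0$. Then $$q^TDz(\bar p)q=-A\alpha^2+R(u)\alpha-S(u)+M(u),$$ where $$A:=\sum_{i\in I_N}\frac{\bar r_i^0}{\bar r_i}(\bar r_{i0}+\omega_{i0}-\bar x_{i0}),\qquad S(u):=\sum_{i\in I_N}\sum_{n=1}^N\frac{\bar r_{in}}{\bar p_n}\bigl(u_n-\bar p_n\Lambda_i(u)\bigr)^2,$$ $$R(u):=\sum_{i\in I_N}\frac{\bar r_{i0}}{\bar r_i}\sum_{m=1}^N(\bar x_{im}-\omega_{im})u_m,\qquad M(u):=\sum_{i\in I_N}\frac{\bar r_i^0}{\bar r_i}\Lambda_i(u)\Bigl[\sum_{m=1}^N(\omega_{im}-\bar x_{im})u_m-\bar r_{i0}\Lambda_i(u)\Bigr].$$ Moreover, if $A>0$ then $\Psi(\bar p)>0$, so every $q\in\mathbb R^N$ admits a unique decomposition $q=\alpha\bar p+u$ with $\Psi(u)=0$.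
   Context: $\mathcal E^{N,\beta}$ is a finite exchange economy with agents $I_N$, dated commodities $0,\dots,N$, utilities $U_i(x_i)=\sum_{n=0}^N\beta^nu_{in}(x_{in})$, endowments $\omega_i\in\mathbb R_+^{N+1}$, numéraire good $0$, future prices $p\in\mathbb R^N$, and aggregate excess demand $z(p)$ for future goods; $Dz(\bar p)=(\partial z_n/\partial p_m(\bar p))_{m,n=1}^N$. At an equilibrium $(\bar p,\bar x)$: $\bar r_{in}:=u_{in}'(\bar x_{in})/(-u_{in}''(\bar x_{in}))$, $\bar r_i^0:=\sum_{n=1}^N\bar p_n\bar r_{in}$, $\bar r_i:=\bar r_{i0}+\bar r_i^0$, $\Lambda_i(q):=\sum_{n=1}^N\bar r_{in}q_n/\bar r_i^0$, and the linear functional $\Psi:\mathbb R^N\to\mathbb R$ is $\Psi(q):=\sum_{i\in I_N}\frac{2\bar r_{i0}+\omega_{i0}-\bar x_{i0}}{\bar r_i}\,\bar r_i^0\Lambda_i(q)$. *)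

theory Defs
  imports "HOL-Analysis.Analysis"
begin

text \<open>Exchange economy with dated commodities 0..N; good 0 is the numeraire (price 1),
  future prices p 1, ..., p N. Bundles and endowments are functions nat => real,
  only coordinates 0..N matter.\<close>

definition pval :: "nat \<Rightarrow> (nat \<Rightarrow> real) \<Rightarrow> (nat \<Rightarrow> real) \<Rightarrow> real" where
  "pval N p x = x 0 + (\<Sum>n=1..N. p n * x n)"

definition cons_set :: "nat \<Rightarrow> (nat \<Rightarrow> real) set" where
  "cons_set N = {x. (\<forall>n\<le>N. 0 < x n) \<and> (\<forall>n>N. x n = 0)}"

definition budget :: "nat \<Rightarrow> (nat \<Rightarrow> real) \<Rightarrow> (nat \<Rightarrow> real) \<Rightarrow> (nat \<Rightarrow> real) set" where
  "budget N p w = {x \<in> cons_set N. pval N p x \<le> pval N p w}"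

definition Util :: "nat \<Rightarrow> real \<Rightarrow> (nat \<Rightarrow> real \<Rightarrow> real) \<Rightarrow> (nat \<Rightarrow> real) \<Rightarrow> real" where
  "Util N \<beta> ui x = (\<Sum>n=0..N. \<beta> ^ n * ui n (x n))"

definition is_demand :: "nat \<Rightarrow> real \<Rightarrow> (nat \<Rightarrow> real \<Rightarrow> real) \<Rightarrow> (nat \<Rightarrow> real)
    \<Rightarrow> (nat \<Rightarrow> real) \<Rightarrow> (nat \<Rightarrow> real) \<Rightarrow> bool" where
  "is_demand N \<beta> ui w p x \<longleftrightarrow>
     x \<in> budget N p w \<and> (\<forall>y \<in> budget N p w. Util N \<beta> ui y \<le> Util N \<beta> ui x)"

definition demand :: "nat \<Rightarrow> real \<Rightarrow> (nat \<Rightarrow> real \<Rightarrow> real) \<Rightarrow> (nat \<Rightarrow> real)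
    \<Rightarrow> (nat \<Rightarrow> real) \<Rightarrow> (nat \<Rightarrow> real)" where
  "demand N \<beta> ui w p = (THE x. is_demand N \<beta> ui w p x)"

text \<open>Aggregate excess demand (component n, meaningful for future goods n = 1..N).\<close>
definition excess_demand :: "nat \<Rightarrow> real \<Rightarrow> 'a set \<Rightarrow> ('a \<Rightarrow> nat \<Rightarrow> real \<Rightarrow> real)
    \<Rightarrow> ('a \<Rightarrow> nat \<Rightarrow> real) \<Rightarrow> (nat \<Rightarrow> real) \<Rightarrow> nat \<Rightarrow> real" where
  "excess_demand N \<beta> I u \<omega> p n = (\<Sum>i\<in>I. demand N \<beta> (u i) (\<omega> i) p n - \<omega> i n)"

definition competitive_equilibrium :: "nat \<Rightarrow> real \<Rightarrow> 'a set \<Rightarrow> ('a \<Rightarrow> nat \<Rightarrow> real \<Rightarrow> real)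
    \<Rightarrow> ('a \<Rightarrow> nat \<Rightarrow> real) \<Rightarrow> (nat \<Rightarrow> real) \<Rightarrow> ('a \<Rightarrow> nat \<Rightarrow> real) \<Rightarrow> bool" where
  "competitive_equilibrium N \<beta> I u \<omega> p x \<longleftrightarrow>
     (\<forall>i\<in>I. is_demand N \<beta> (u i) (\<omega> i) p (x i)) \<and>
     (\<forall>n\<le>N. (\<Sum>i\<in>I. x i n) = (\<Sum>i\<in>I. \<omega> i n))"


text \<open>Equilibrium quantities. Here u1, u2 are the first and second derivatives of the
  period utilities, pb the equilibrium future prices, xb the equilibrium allocation.\<close>

definition rbar :: "('a \<Rightarrow> nat \<Rightarrow> real \<Rightarrow> real) \<Rightarrow> ('a \<Rightarrow> nat \<Rightarrow> real \<Rightarrow> real)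
    \<Rightarrow> ('a \<Rightarrow> nat \<Rightarrow> real) \<Rightarrow> 'a \<Rightarrow> nat \<Rightarrow> real" where
  "rbar u1 u2 xb i n = u1 i n (xb i n) / (- u2 i n (xb i n))"

definition rbar0 :: "nat \<Rightarrow> (nat \<Rightarrow> real) \<Rightarrow> ('a \<Rightarrow> nat \<Rightarrow> real \<Rightarrow> real) \<Rightarrow> ('a \<Rightarrow> nat \<Rightarrow> real \<Rightarrow> real)
    \<Rightarrow> ('a \<Rightarrow> nat \<Rightarrow> real) \<Rightarrow> 'a \<Rightarrow> real" where
  "rbar0 N pb u1 u2 xb i = (\<Sum>n=1..N. pb n * rbar u1 u2 xb i n)"

definition rbartot :: "nat \<Rightarrow> (nat \<Rightarrow> real) \<Rightarrow> ('a \<Rightarrow> nat \<Rightarrow> real \<Rightarrow> real) \<Rightarrow> ('a \<Rightarrow> nat \<Rightarrow> real \<Rightarrow> real)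
    \<Rightarrow> ('a \<Rightarrow> nat \<Rightarrow> real) \<Rightarrow> 'a \<Rightarrow> real" where
  "rbartot N pb u1 u2 xb i = rbar u1 u2 xb i 0 + rbar0 N pb u1 u2 xb i"

definition Lam :: "nat \<Rightarrow> (nat \<Rightarrow> real) \<Rightarrow> ('a \<Rightarrow> nat \<Rightarrow> real \<Rightarrow> real) \<Rightarrow> ('a \<Rightarrow> nat \<Rightarrow> real \<Rightarrow> real)
    \<Rightarrow> ('a \<Rightarrow> nat \<Rightarrow> real) \<Rightarrow> 'a \<Rightarrow> (nat \<Rightarrow> real) \<Rightarrow> real" where
  "Lam N pb u1 u2 xb i q = (\<Sum>n=1..N. rbar u1 u2 xb i n * q n) / rbar0 N pb u1 u2 xb i"

definition Psi :: "'a set \<Rightarrow> nat \<Rightarrow> (nat \<Rightarrow> real) \<Rightarrow> ('a \<Rightarrow> nat \<Rightarrow> real \<Rightarrow> real) \<Rightarrow> ('a \<Rightarrow> nat \<Rightarrow> real \<Rightarrow> real)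
    \<Rightarrow> ('a \<Rightarrow> nat \<Rightarrow> real) \<Rightarrow> ('a \<Rightarrow> nat \<Rightarrow> real) \<Rightarrow> (nat \<Rightarrow> real) \<Rightarrow> real" where
  "Psi I N pb u1 u2 \<omega> xb q = (\<Sum>i\<in>I.
     (2 * rbar u1 u2 xb i 0 + \<omega> i 0 - xb i 0) / rbartot N pb u1 u2 xb i
       * rbar0 N pb u1 u2 xb i * Lam N pb u1 u2 xb i q)"

definition Acoef :: "'a set \<Rightarrow> nat \<Rightarrow> (nat \<Rightarrow> real) \<Rightarrow> ('a \<Rightarrow> nat \<Rightarrow> real \<Rightarrow> real) \<Rightarrow> ('a \<Rightarrow> nat \<Rightarrow> real \<Rightarrow> real)
    \<Rightarrow> ('a \<Rightarrow> nat \<Rightarrow> real) \<Rightarrow> ('a \<Rightarrow> nat \<Rightarrow> real) \<Rightarrow> real" where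
  "Acoef I N pb u1 u2 \<omega> xb = (\<Sum>i\<in>I. rbar0 N pb u1 u2 xb i / rbartot N pb u1 u2 xb i
       * (rbar u1 u2 xb i 0 + \<omega> i 0 - xb i 0))"

definition Sfun :: "'a set \<Rightarrow> nat \<Rightarrow> (nat \<Rightarrow> real) \<Rightarrow> ('a \<Rightarrow> nat \<Rightarrow> real \<Rightarrow> real) \<Rightarrow> ('a \<Rightarrow> nat \<Rightarrow> real \<Rightarrow> real)
    \<Rightarrow> ('a \<Rightarrow> nat \<Rightarrow> real) \<Rightarrow> (nat \<Rightarrow> real) \<Rightarrow> real" where
  "Sfun I N pb u1 u2 xb v = (\<Sum>i\<in>I. \<Sum>n=1..N.
       rbar u1 u2 xb i n / pb n * (v n - pb n * Lam N pb u1 u2 xb i v)^2)"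

definition Rfun :: "'a set \<Rightarrow> nat \<Rightarrow> (nat \<Rightarrow> real) \<Rightarrow> ('a \<Rightarrow> nat \<Rightarrow> real \<Rightarrow> real) \<Rightarrow> ('a \<Rightarrow> nat \<Rightarrow> real \<Rightarrow> real)
    \<Rightarrow> ('a \<Rightarrow> nat \<Rightarrow> real) \<Rightarrow> ('a \<Rightarrow> nat \<Rightarrow> real) \<Rightarrow> (nat \<Rightarrow> real) \<Rightarrow> real" where
  "Rfun I N pb u1 u2 \<omega> xb v = (\<Sum>i\<in>I. rbar u1 u2 xb i 0 / rbartot N pb u1 u2 xb i
       * (\<Sum>m=1..N. (xb i m - \<omega> i m) * v m))"

definition Mfun :: "'a set \<Rightarrow> nat \<Rightarrow> (nat \<Rightarrow> real) \<Rightarrow> ('a \<Rightarrow> nat \<Rightarrow> real \<Rightarrow> real) \<Rightarrow> ('a \<Rightarrow> nat \<Rightarrow> real \<Rightarrow> real)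
    \<Rightarrow> ('a \<Rightarrow> nat \<Rightarrow> real) \<Rightarrow> ('a \<Rightarrow> nat \<Rightarrow> real) \<Rightarrow> (nat \<Rightarrow> real) \<Rightarrow> real" where
  "Mfun I N pb u1 u2 \<omega> xb v = (\<Sum>i\<in>I. rbar0 N pb u1 u2 xb i / rbartot N pb u1 u2 xb i
       * Lam N pb u1 u2 xb i v
       * ((\<Sum>m=1..N. (\<omega> i m - xb i m) * v m) - rbar u1 u2 xb i 0 * Lam N pb u1 u2 xb i v))"

end

theory Submission
  imports Defs
begin

(* Near the equilibrium prices an agent's demand is the Frisch demand
   x_k = (u_k')^-1 (mu p_k / beta^k), the multiplier mu being pinned down by the budget constraint.
   Strict concavity makes expenditure strictly decreasing in mu, so a one-dimensional implicit
   function theorem makes mu a differentiable function of p_m, and the chain rule gives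
   dx_n/dp_m = - r_n ((x_m - omega_m - r_m) / r + [n = m] / p_n), where r_k = u_k' / (- u_k'')
   and r = r_0 + sum_n p_n r_n. Each agent's Jacobian is therefore rank one plus diagonal.
   Evaluating its quadratic form at q = alpha p + u with the budget identity, and summing over
   agents using market clearing and Psi(u) = 0, yields the formula. Finally Psi(p) exceeds A by
   the nonnegative sum of r_i0 r_i^0 / r_i, and a linear functional that does not vanish at p
   splits every q uniquely. *)

section \<open>Regular period utilities\<close>

locale regular_utility =
  fixes f f' f'' :: "real \<Rightarrow> real"
  assumes has_marginal: "0 < x \<Longrightarrow> (f has_real_derivative f' x) (at x)"
    and marginal_has_derivative: "0 < x \<Longrightarrow> (f' has_real_derivative f'' x) (at x)"
    and marginal_pos: "0 < x \<Longrightarrow> 0 < f' x"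
    and second_derivative_neg: "0 < x \<Longrightarrow> f'' x < 0"
begin

lemma marginal_strict_decreasing:
  assumes "0 < a" "a < b" shows "f' b < f' a"
proof (rule DERIV_neg_imp_decreasing[OF \<open>a < b\<close>])
  fix x assume "a \<le> x" "x \<le> b"
  then have "0 < x" using assms by simp
  then show "\<exists>y. (f' has_real_derivative y) (at x) \<and> y < 0"
    using marginal_has_derivative second_derivative_neg by blast
qed

lemma strict_increasing:
  assumes "0 < a" "a < b" shows "f a < f b"
proof (rule DERIV_pos_imp_increasing[OF \<open>a < b\<close>])
  fix x assume "a \<le> x" "x \<le> b"
  then have "0 < x" using assms by simp
  then show "\<exists>y. (f has_real_derivative y) (at x) \<and> y > 0"
    using has_marginal marginal_pos by blast
qed

lemma below_tangent:
  assumes "0 < a" "0 < b" "a \<noteq> b"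
  shows "f b < f a + f' a * (b - a)"
proof (cases "a < b")
  case True
  obtain z where z: "a < z" "z < b" "f b - f a = (b - a) * f' z"
    using MVT2[of a b f f'] True assms has_marginal by force
  have "f' z < f' a" using marginal_strict_decreasing z assms by simp
  then have "(b - a) * f' z < (b - a) * f' a" using True by simp
  with z show ?thesis by (simp add: algebra_simps)
next
  case False
  then have "b < a" using assms by simp
  obtain z where z: "b < z" "z < a" "f a - f b = (a - b) * f' z"
    using MVT2[of b a f f'] \<open>b < a\<close> assms has_marginal by force
  have "f' a < f' z" using marginal_strict_decreasing z assms by simp
  then have "(a - b) * f' a < (a - b) * f' z" using \<open>b < a\<close> by simp
  with z show ?thesis by (simp add: algebra_simps)
qed

lemma below_tangent_le:
  assumes "0 < a" "0 < b" shows "f b \<le> f a + f' a * (b - a)"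
  using below_tangent[OF assms] by (cases "a = b") auto

lemma isCont_marginal: "0 < x \<Longrightarrow> isCont f' x"
  using marginal_has_derivative by (rule DERIV_isCont)

lemma inj_on_marginal: "inj_on f' {0<..}"
  by (rule inj_onI) (metis greaterThan_iff linorder_cases marginal_strict_decreasing order_less_irrefl)

definition marginal_inv :: "real \<Rightarrow> real" where
  "marginal_inv = the_inv_into {0<..} f'"

lemma marginal_inv_marginal: "0 < x \<Longrightarrow> marginal_inv (f' x) = x"
  unfolding marginal_inv_def using the_inv_into_f_f[OF inj_on_marginal] by simp

lemma
  assumes "y \<in> f' ` {0<..}"
  shows marginal_marginal_inv: "f' (marginal_inv y) = y"
    and marginal_inv_pos: "0 < marginal_inv y"
  using assms marginal_inv_marginal by auto

lemma marginal_image_pos: "y \<in> f' ` {0<..} \<Longrightarrow> 0 < y"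
  using marginal_pos by auto

lemma open_marginal_image: "open (f' ` {0<..})"
proof (rule openI)
  fix y assume "y \<in> f' ` {0<..}"
  then obtain x where x: "0 < x" "y = f' x" by auto
  define e where "e = min (y - f' (2*x)) (f' (x/2) - y)"
  have "0 < e"
    using marginal_strict_decreasing[of x "2*x"] marginal_strict_decreasing[of "x/2" x] x
    by (auto simp: e_def)
  moreover have "ball y e \<subseteq> f' ` {0<..}"
  proof
    fix z assume "z \<in> ball y e"
    then have "f' (2*x) \<le> z" "z \<le> f' (x/2)" by (auto simp: e_def dist_real_def)
    then obtain w where "x/2 \<le> w" "w \<le> 2*x" "f' w = z"
      using IVT2[of f' "2*x" z "x/2"] x isCont_marginal by force
    then show "z \<in> f' ` {0<..}" using x by force
  qed
  ultimately show "\<exists>e>0. ball y e \<subseteq> f' ` {0<..}" by blast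
qed

lemma isCont_marginal_inv:
  assumes "y \<in> f' ` {0<..}" shows "isCont marginal_inv y"
proof -
  obtain x where x: "0 < x" "y = f' x" using assms by auto
  have "isCont marginal_inv (f' x)"
  proof (rule isCont_inverse_function[where d="x/2" and f=f' and x=x])
    fix z assume "\<bar>z - x\<bar> \<le> x/2"
    then have "0 < z" using x by linarith
    then show "marginal_inv (f' z) = z" "isCont f' z"
      using marginal_inv_marginal isCont_marginal by auto
  qed (use x in simp)
  with x show ?thesis by simp
qed

lemma marginal_inv_strict_decreasing:
  assumes "y1 \<in> f' ` {0<..}" "y2 \<in> f' ` {0<..}" "y1 < y2"
  shows "marginal_inv y2 < marginal_inv y1"
  using assms marginal_strict_decreasing[of "marginal_inv y1" "marginal_inv y2"]
  by (metis linorder_neqE_linordered_idom marginal_inv_pos marginal_marginal_inv order.asym)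

lemma marginal_inv_has_derivative:
  assumes "0 < x"
  shows "(marginal_inv has_real_derivative inverse (f'' x)) (at (f' x))"
proof -
  have fx: "f' x \<in> f' ` {0<..}" using assms by auto
  obtain e where e: "0 < e" "ball (f' x) e \<subseteq> f' ` {0<..}"
    using open_marginal_image fx openE by blast
  show ?thesis
  proof (rule DERIV_inverse_function[where a="f' x - e" and b="f' x + e"])
    show "(f' has_real_derivative f'' x) (at (marginal_inv (f' x)))"
      using marginal_has_derivative assms marginal_inv_marginal by simp
    show "f'' x \<noteq> 0" using second_derivative_neg assms by (simp add: less_imp_neq)
    show "isCont marginal_inv (f' x)" using isCont_marginal_inv fx .
    fix z assume "f' x - e < z" "z < f' x + e"
    then have "z \<in> ball (f' x) e" by (simp add: dist_real_def abs_if)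
    then show "f' (marginal_inv z) = z" using e marginal_marginal_inv by auto
  qed (use e in auto)
qed

end

section \<open>A one-dimensional implicit function theorem\<close>

lemma decreasing_family_continuous_root:
  fixes G :: "real \<Rightarrow> real \<Rightarrow> real"
  assumes "0 < \<delta>"
    and decreasing: "\<And>t a b. \<bar>t - t0\<bar> < \<delta> \<Longrightarrow> l0 - \<delta> \<le> a \<Longrightarrow> a < b \<Longrightarrow> b \<le> l0 + \<delta>
                       \<Longrightarrow> G b t < G a t"
    and cont_fst: "\<And>t. \<bar>t - t0\<bar> < \<delta> \<Longrightarrow> continuous_on {l0-\<delta>..l0+\<delta>} (\<lambda>a. G a t)"
    and cont_snd: "\<And>a. l0 - \<delta> \<le> a \<Longrightarrow> a \<le> l0 + \<delta> \<Longrightarrow> isCont (G a) t0"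
    and root: "G l0 t0 = 0"
  obtains l where "l t0 = l0" "isCont l t0" "\<forall>\<^sub>F t in nhds t0. \<bar>l t - l0\<bar> < \<delta> \<and> G (l t) t = 0"
proof -
  define l where "l t = (THE a. \<bar>a - l0\<bar> < \<delta> \<and> G a t = 0)" for t
  have l_eqI: "l t = a" if "\<bar>t - t0\<bar> < \<delta>" "\<bar>a - l0\<bar> < \<delta>" "G a t = 0" for t a
    unfolding l_def
  proof (rule the_equality)
    fix a' assume "\<bar>a' - l0\<bar> < \<delta> \<and> G a' t = 0"
    then show "a' = a"
      using that decreasing[of t a a'] decreasing[of t a' a] unfolding abs_less_iff
      by (cases a' a rule: linorder_cases) auto
  qed (use that in simp)
  have l_t0: "l t0 = l0" using l_eqI[of t0 l0] \<open>0 < \<delta>\<close> root by simp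
  have near: "\<forall>\<^sub>F t in nhds t0. \<bar>l t - l0\<bar> < \<epsilon> \<and> G (l t) t = 0" if eps: "0 < \<epsilon>" "\<epsilon> \<le> \<delta>" for \<epsilon>
  proof -
    have "0 < G (l0 - \<epsilon>) t0" "G (l0 + \<epsilon>) t0 < 0"
      using decreasing[of t0 "l0 - \<epsilon>" l0] decreasing[of t0 l0 "l0 + \<epsilon>"] eps root by auto
    moreover have "isCont (G (l0 - \<epsilon>)) t0" "isCont (G (l0 + \<epsilon>)) t0"
      using cont_snd eps by auto
    ultimately have "\<forall>\<^sub>F t in nhds t0. 0 < G (l0 - \<epsilon>) t" "\<forall>\<^sub>F t in nhds t0. G (l0 + \<epsilon>) t < 0"
      by (auto simp: isCont_def tendsto_at_iff_tendsto_nhds dest: order_tendstoD)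
    moreover have "\<forall>\<^sub>F t in nhds t0. \<bar>t - t0\<bar> < \<delta>"
      using eventually_nhds_metric[of _ t0] \<open>0 < \<delta>\<close> by (auto simp: dist_real_def)
    ultimately show ?thesis
    proof eventually_elim
      case (elim t)
      have "continuous_on {l0-\<epsilon>..l0+\<epsilon>} (\<lambda>a. G a t)"
        by (rule continuous_on_subset[OF cont_fst[OF elim(3)]]) (use eps in auto)
      then obtain a where a: "l0 - \<epsilon> \<le> a" "a \<le> l0 + \<epsilon>" "G a t = 0"
        using IVT2'[where f="\<lambda>a. G a t" and a="l0 - \<epsilon>" and y=0 and b="l0 + \<epsilon>"] elim eps by force
      then have "\<bar>a - l0\<bar> < \<epsilon>" using elim by (cases "a = l0 - \<epsilon> \<or> a = l0 + \<epsilon>") auto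
      then show ?case using l_eqI[of t a] elim a eps by auto
    qed
  qed
  have "(l \<longlongrightarrow> l0) (nhds t0)"
  proof (rule tendstoI)
    fix e :: real assume "0 < e"
    then show "\<forall>\<^sub>F t in nhds t0. dist (l t) l0 < e"
      using near[of "min e \<delta>"] \<open>0 < \<delta>\<close> by (auto simp: dist_real_def elim: eventually_mono)
  qed
  then have "isCont l t0" unfolding isCont_def using l_t0 by (metis at_within_le_nhds tendsto_mono)
  with l_t0 near[of \<delta>] \<open>0 < \<delta>\<close> show ?thesis using that by simp
qed

lemma implicit_quotient_bound:
  fixes a b e x y :: real
  assumes "a \<noteq> 0" "y \<noteq> 0" "0 \<le> e" "e \<le> \<bar>a\<bar>/2"
    and remainder: "\<bar>a * x + b * y\<bar> \<le> e * (\<bar>x\<bar> + \<bar>y\<bar>)"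
  shows "\<bar>x / y - - b / a\<bar> \<le> e * (2 + 2 * \<bar>b\<bar> / \<bar>a\<bar>) / \<bar>a\<bar>"
proof -
  have "\<bar>a\<bar> * \<bar>x\<bar> \<le> \<bar>a * x + b * y\<bar> + \<bar>b\<bar> * \<bar>y\<bar>"
    using abs_triangle_ineq4[of "a * x + b * y" "b * y"] by (simp add: abs_mult)
  moreover have "e * \<bar>x\<bar> \<le> \<bar>a\<bar>/2 * \<bar>x\<bar>" "e * \<bar>y\<bar> \<le> \<bar>a\<bar>/2 * \<bar>y\<bar>"
    using mult_right_mono[OF assms(4), of "\<bar>x\<bar>"] mult_right_mono[OF assms(4), of "\<bar>y\<bar>"]
    by simp_all
  ultimately have "\<bar>a\<bar>/2 * \<bar>x\<bar> \<le> (\<bar>a\<bar>/2 + \<bar>b\<bar>) * \<bar>y\<bar>"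
    using remainder by (simp add: algebra_simps)
  then have "\<bar>x\<bar> \<le> (1 + 2 * \<bar>b\<bar> / \<bar>a\<bar>) * \<bar>y\<bar>"
    using \<open>a \<noteq> 0\<close> by (simp add: field_simps)
  then have "e * \<bar>x\<bar> \<le> e * ((1 + 2 * \<bar>b\<bar> / \<bar>a\<bar>) * \<bar>y\<bar>)"
    using \<open>0 \<le> e\<close> by (rule mult_left_mono)
  then have bound: "\<bar>a * x + b * y\<bar> \<le> e * (2 + 2 * \<bar>b\<bar> / \<bar>a\<bar>) * \<bar>y\<bar>"
    using remainder by (simp add: algebra_simps)
  have "x / y - - b / a = (a * x + b * y) / (a * y)"
    using assms(1,2) by (simp add: field_simps)
  then have "\<bar>x / y - - b / a\<bar> = \<bar>a * x + b * y\<bar> / (\<bar>a\<bar> * \<bar>y\<bar>)"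
    by (simp add: abs_mult)
  also have "\<dots> \<le> e * (2 + 2 * \<bar>b\<bar> / \<bar>a\<bar>) * \<bar>y\<bar> / (\<bar>a\<bar> * \<bar>y\<bar>)"
    using bound by (rule divide_right_mono) simp
  also have "\<dots> = e * (2 + 2 * \<bar>b\<bar> / \<bar>a\<bar>) / \<bar>a\<bar>"
    using assms(2) by simp
  finally show ?thesis .
qed

lemma implicit_function_has_real_derivative:
  fixes G :: "real \<Rightarrow> real \<Rightarrow> real" and l :: "real \<Rightarrow> real"
  assumes G_deriv: "((\<lambda>z. G (fst z) (snd z)) has_derivative (\<lambda>z. a * fst z + b * snd z)) (at (l0, t0))"
    and "a \<noteq> 0" and root: "G l0 t0 = 0"
    and "isCont l t0" and l_t0: "l t0 = l0" and roots: "\<forall>\<^sub>F t in nhds t0. G (l t) t = 0"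
  shows "(l has_real_derivative - b / a) (at t0)"
  unfolding has_field_derivative_iff LIM_eq
proof (intro allI impI)
  fix r :: real assume "0 < r"
  define K where "K = 2 + 2 * \<bar>b\<bar> / \<bar>a\<bar>"
  have "0 < K" unfolding K_def by (simp add: add_pos_nonneg)
  define e where "e = min (\<bar>a\<bar>/2) (\<bar>a\<bar> * r / (2 * K))"
  have e: "0 < e" "e \<le> \<bar>a\<bar>/2" "e * K / \<bar>a\<bar> < r"
    using \<open>a \<noteq> 0\<close> \<open>0 < r\<close> \<open>0 < K\<close> by (auto simp: e_def min_def field_simps)
  obtain d1 where "d1 > 0" and d1: "\<And>z. norm (z - (l0, t0)) < d1 \<Longrightarrow>
      \<bar>G (fst z) (snd z) - G l0 t0 - (a * fst (z - (l0, t0)) + b * snd (z - (l0, t0)))\<bar>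
        \<le> e * norm (z - (l0, t0))"
    using G_deriv \<open>0 < e\<close> unfolding has_derivative_at_alt by force
  obtain d2 where "d2 > 0" and d2: "\<And>t. t \<noteq> t0 \<Longrightarrow> \<bar>t - t0\<bar> < d2 \<Longrightarrow> \<bar>l t - l0\<bar> < d1/2"
    using \<open>isCont l t0\<close> l_t0 \<open>d1 > 0\<close> unfolding isCont_def LIM_eq
    by (metis half_gt_zero real_norm_def)
  obtain d3 where "d3 > 0" and d3: "\<And>t. dist t t0 < d3 \<Longrightarrow> G (l t) t = 0"
    using roots unfolding eventually_nhds_metric by blast
  have "\<bar>(l t - l t0) / (t - t0) - - b / a\<bar> < r"
    if "t \<noteq> t0" "\<bar>t - t0\<bar> < min (d1/2) (min d2 d3)" for t
  proof -
    define x y where "x = l t - l0" and "y = t - t0"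
    have norm_le: "norm ((l t, t) - (l0, t0)) \<le> \<bar>x\<bar> + \<bar>y\<bar>"
      by (simp add: norm_Pair x_def y_def sqrt_sum_squares_le_sum_abs)
    moreover have "\<bar>x\<bar> + \<bar>y\<bar> < d1"
      using d2[of t] that by (simp add: x_def y_def)
    ultimately have "\<bar>a * x + b * y\<bar> \<le> e * norm ((l t, t) - (l0, t0))"
      using d1[of "(l t, t)"] d3[of t] root that by (simp add: x_def y_def dist_real_def)
    also have "\<dots> \<le> e * (\<bar>x\<bar> + \<bar>y\<bar>)"
      using norm_le \<open>0 < e\<close> by (simp add: mult_left_mono)
    finally have "\<bar>x / y - - b / a\<bar> \<le> e * K / \<bar>a\<bar>"
      using implicit_quotient_bound[OF \<open>a \<noteq> 0\<close>] e that by (simp add: K_def y_def)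
    with e(3) show ?thesis by (simp add: x_def y_def l_t0)
  qed
  moreover have "0 < min (d1/2) (min d2 d3)" using \<open>d1 > 0\<close> \<open>d2 > 0\<close> \<open>d3 > 0\<close> by simp
  ultimately show "\<exists>s>0. \<forall>t. t \<noteq> t0 \<and> norm (t - t0) < s \<longrightarrow>
      norm ((l t - l t0) / (t - t0) - - b / a) < r"
    by (metis real_norm_def)
qed

section \<open>Consumer demand\<close>

definition numeraire_price :: "(nat \<Rightarrow> real) \<Rightarrow> nat \<Rightarrow> real" where
  "numeraire_price p k = (if k = 0 then 1 else p k)"

lemma numeraire_price_0 [simp]: "numeraire_price p 0 = 1"
  by (simp add: numeraire_price_def)

lemma numeraire_price_update [simp]:
  "m \<noteq> 0 \<Longrightarrow> numeraire_price (p(m := t)) k = (if k = m then t else numeraire_price p k)"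
  by (simp add: numeraire_price_def)

lemma sum_atLeast0_split: "(\<Sum>k=0..(N::nat). f k) = f 0 + (\<Sum>k=1..N. f k)"
  using sum.atLeast_Suc_atMost[of 0 N f] by simp

lemma pval_eq_sum: "pval N p x = (\<Sum>k=0..N. numeraire_price p k * x k)"
  by (simp add: pval_def sum_atLeast0_split numeraire_price_def)

lemma pval_bundle_update:
  assumes "n \<le> N" shows "pval N p (x(n := x n + s)) = pval N p x + s * numeraire_price p n"
proof -
  have "(\<Sum>k=0..N. numeraire_price p k * (x(n := x n + s)) k)
      = (\<Sum>k=0..N. numeraire_price p k * x k + (if k = n then s * numeraire_price p n else 0))"
    by (rule sum.cong) (auto simp: algebra_simps)
  then show ?thesis
    using \<open>n \<le> N\<close> by (simp add: pval_eq_sum sum.distrib)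
qed

lemma cons_set_update: "x \<in> cons_set N \<Longrightarrow> n \<le> N \<Longrightarrow> 0 < x n + s \<Longrightarrow> x(n := x n + s) \<in> cons_set N"
  by (auto simp: cons_set_def)

lemma pval_price_update:
  assumes "m \<in> {1..N}" shows "pval N (p(m := t)) w = pval N p w + (t - p m) * w m"
proof -
  have "(\<Sum>k=1..N. (p(m := t)) k * w k) = (\<Sum>k=1..N. p k * w k + (if k = m then (t - p m) * w m else 0))"
    by (rule sum.cong) (auto simp: algebra_simps)
  then show ?thesis using assms by (simp add: pval_def sum.distrib)
qed

locale regular_consumer =
  fixes N :: nat and \<beta> :: real and u u1 u2 :: "nat \<Rightarrow> real \<Rightarrow> real"
  assumes regular: "n \<le> N \<Longrightarrow> regular_utility (u n) (u1 n) (u2 n)"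
    and discount_pos: "0 < \<beta>"
begin

lemma marginal_pos: "n \<le> N \<Longrightarrow> 0 < x \<Longrightarrow> 0 < u1 n x"
  using regular regular_utility.marginal_pos by blast

lemma Util_below_tangent:
  assumes x: "x \<in> cons_set N" and y: "y \<in> cons_set N" and "y \<noteq> x"
    and proportional: "\<forall>k\<le>N. \<beta>^k * u1 k (x k) = \<mu> * numeraire_price p k"
  shows "Util N \<beta> u y < Util N \<beta> u x + \<mu> * (pval N p y - pval N p x)"
proof -
  let ?T = "\<lambda>k. \<beta>^k * (u k (x k) + u1 k (x k) * (y k - x k))"
  have "(\<Sum>k=0..N. \<beta>^k * (u1 k (x k) * (y k - x k))) = (\<Sum>k=0..N. \<mu> * (numeraire_price p k * (y k - x k)))"
    by (rule sum.cong) (use proportional in \<open>auto simp flip: mult.assoc\<close>)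
  then have tangent: "(\<Sum>k=0..N. ?T k) = Util N \<beta> u x + \<mu> * (pval N p y - pval N p x)"
    by (simp add: Util_def pval_eq_sum distrib_left sum.distrib sum_distrib_left sum_subtractf
        right_diff_distrib)
  have xy: "0 < x k" "0 < y k" if "k \<le> N" for k
    using x y that by (auto simp: cons_set_def)
  have le: "\<beta>^k * u k (y k) \<le> ?T k" if "k \<in> {0..N}" for k
    using regular_utility.below_tangent_le[OF regular xy] that discount_pos by simp
  obtain k where "y k \<noteq> x k" using \<open>y \<noteq> x\<close> by blast
  moreover have "k \<le> N" using x y \<open>y k \<noteq> x k\<close> by (cases "k \<le> N") (auto simp: cons_set_def)
  ultimately have "\<beta>^k * u k (y k) < ?T k"
    using regular_utility.below_tangent[OF regular xy] discount_pos by simp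
  then have "Util N \<beta> u y < (\<Sum>k=0..N. ?T k)"
    unfolding Util_def using \<open>k \<le> N\<close> le by (intro sum_strict_mono_ex1) auto
  with tangent show ?thesis by simp
qed

lemma demand_eqI:
  assumes x: "x \<in> cons_set N" and budget: "pval N p x = pval N p w"
    and proportional: "\<forall>k\<le>N. \<beta>^k * u1 k (x k) = \<mu> * numeraire_price p k"
  shows "demand N \<beta> u w p = x"
proof -
  have "0 < \<mu>" using proportional[rule_format, of 0] marginal_pos[of 0 "x 0"] x by (simp add: cons_set_def)
  have better: "Util N \<beta> u y < Util N \<beta> u x" if "y \<in> budget N p w" "y \<noteq> x" for y
  proof -
    have "\<mu> * (pval N p y - pval N p x) \<le> 0"
      using that(1) budget \<open>0 < \<mu>\<close> by (simp add: budget_def mult_le_0_iff)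
    then show ?thesis
      using Util_below_tangent[OF x _ that(2) proportional] that(1) by (simp add: budget_def)
  qed
  have "is_demand N \<beta> u w p x"
    using x budget better by (force simp: is_demand_def budget_def)
  moreover have "y = x" if "is_demand N \<beta> u w p y" for y
    using that better \<open>is_demand N \<beta> u w p x\<close> by (force simp: is_demand_def)
  ultimately show ?thesis unfolding demand_def by (rule the_equality)
qed

lemma Util_update_strict_increasing:
  assumes "x \<in> cons_set N" "n \<le> N" "0 < s"
  shows "Util N \<beta> u x < Util N \<beta> u (x(n := x n + s))"
  unfolding Util_def
proof (rule sum_strict_mono_ex1)
  have "u n (x n) < u n (x n + s)"
    using regular_utility.strict_increasing[OF regular[OF \<open>n \<le> N\<close>]] assms by (simp add: cons_set_def)
  then show "\<forall>k\<in>{0..N}. \<beta>^k * u k (x k) \<le> \<beta>^k * u k ((x(n := x n + s)) k)"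
    "\<exists>k\<in>{0..N}. \<beta>^k * u k (x k) < \<beta>^k * u k ((x(n := x n + s)) k)"
    using discount_pos \<open>n \<le> N\<close> by auto
qed simp

lemma Util_line_has_derivative:
  assumes "\<forall>k\<le>N. 0 < x k"
  shows "((\<lambda>s. Util N \<beta> u (\<lambda>k. x k + s * c k)) has_real_derivative
           (\<Sum>k=0..N. \<beta>^k * (u1 k (x k) * c k))) (at 0)"
  unfolding Util_def
proof (rule DERIV_sum)
  fix k assume "k \<in> {0..N}"
  then have "(u k has_real_derivative u1 k (x k)) (at (x k + 0 * c k))"
    using regular_utility.has_marginal[OF regular] assms by simp
  then have "((\<lambda>s. u k (x k + s * c k)) has_real_derivative u1 k (x k) * c k) (at 0)"
    by (rule DERIV_chain2) (auto intro!: derivative_eq_intros)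
  then show "((\<lambda>s. \<beta>^k * u k (x k + s * c k)) has_real_derivative \<beta>^k * (u1 k (x k) * c k)) (at 0)"
    by (rule DERIV_cmult)
qed

lemma
  assumes "is_demand N \<beta> u w p x"
  shows is_demand_cons_set: "x \<in> cons_set N"
    and is_demand_optimal: "y \<in> cons_set N \<Longrightarrow> pval N p y \<le> pval N p w \<Longrightarrow> Util N \<beta> u y \<le> Util N \<beta> u x"
  using assms by (auto simp: is_demand_def budget_def)

lemma is_demand_prices_pos:
  assumes dem: "is_demand N \<beta> u w p x"
  shows "\<forall>n\<in>{1..N}. 0 < p n"
proof (rule ballI, rule ccontr)
  fix n assume n: "n \<in> {1..N}" and "\<not> 0 < p n"
  have x: "x \<in> cons_set N" using is_demand_cons_set[OF dem] .
  then have "x(n := x n + 1) \<in> cons_set N"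
    using n by (intro cons_set_update) (auto simp: cons_set_def add_pos_pos)
  moreover have "pval N p (x(n := x n + 1)) \<le> pval N p w"
    using pval_bundle_update[of n N p x 1] n \<open>\<not> 0 < p n\<close> dem
    by (auto simp: is_demand_def budget_def numeraire_price_def)
  ultimately have "Util N \<beta> u (x(n := x n + 1)) \<le> Util N \<beta> u x"
    by (rule is_demand_optimal[OF dem])
  with Util_update_strict_increasing[OF x, of n 1] n show False by simp
qed

lemma is_demand_budget_binding:
  assumes dem: "is_demand N \<beta> u w p x"
  shows "pval N p x = pval N p w"
proof (rule ccontr)
  assume "pval N p x \<noteq> pval N p w"
  define s where "s = pval N p w - pval N p x"
  have "0 < s" using dem \<open>pval N p x \<noteq> pval N p w\<close> by (simp add: s_def is_demand_def budget_def)
  have x: "x \<in> cons_set N" using is_demand_cons_set[OF dem] .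
  then have "x(0 := x 0 + s) \<in> cons_set N"
    using \<open>0 < s\<close> by (intro cons_set_update) (auto simp: cons_set_def add_pos_pos)
  moreover have "pval N p (x(0 := x 0 + s)) \<le> pval N p w"
    using pval_bundle_update[of 0 N p x s] by (simp add: s_def)
  ultimately have "Util N \<beta> u (x(0 := x 0 + s)) \<le> Util N \<beta> u x"
    by (rule is_demand_optimal[OF dem])
  with Util_update_strict_increasing[OF x, of 0 s] \<open>0 < s\<close> show False by simp
qed

lemma is_demand_first_order:
  assumes dem: "is_demand N \<beta> u w p x"
  shows "\<forall>k\<le>N. \<beta>^k * u1 k (x k) = u1 0 (x 0) * numeraire_price p k"
proof (intro allI impI)
  fix n assume "n \<le> N"
  have x: "x \<in> cons_set N" using is_demand_cons_set[OF dem] .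
  then have xpos: "\<forall>k\<le>N. 0 < x k" by (simp add: cons_set_def)
  show "\<beta>^n * u1 n (x n) = u1 0 (x 0) * numeraire_price p n"
  proof (cases "n = 0")
    case False
    then have n: "n \<in> {1..N}" using \<open>n \<le> N\<close> by simp
    then have "0 < p n" using is_demand_prices_pos[OF dem] by blast
    \<comment> \<open>Moving along c buys good n with the numeraire at constant expenditure.\<close>
    define c where "c k = (if k = n then 1 else if k = 0 then - p n else 0)" for k
    have "(\<Sum>k=1..N. p k * c k) = (\<Sum>k=1..N. if k = n then p n else 0)"
      by (rule sum.cong) (auto simp: c_def)
    then have "pval N p c = 0"
      using n by (simp add: pval_def c_def)
    have "(\<Sum>k=0..N. \<beta>^k * (u1 k (x k) * c k)) = 0"
    proof (rule DERIV_local_max[OF Util_line_has_derivative[OF xpos]])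
      show "0 < min (x n) (x 0 / p n)" using xpos \<open>0 < p n\<close> \<open>n \<le> N\<close> by simp
      show "\<forall>s. \<bar>0 - s\<bar> < min (x n) (x 0 / p n) \<longrightarrow>
          Util N \<beta> u (\<lambda>k. x k + s * c k) \<le> Util N \<beta> u (\<lambda>k. x k + 0 * c k)"
      proof (intro allI impI)
        fix s assume s: "\<bar>0 - s\<bar> < min (x n) (x 0 / p n)"
        then have "\<bar>s * p n\<bar> < x 0" using \<open>0 < p n\<close> by (simp add: abs_mult field_simps)
        then have "(\<lambda>k. x k + s * c k) \<in> cons_set N"
          using x s n by (auto simp: cons_set_def c_def)
        moreover have "pval N p (\<lambda>k. x k + s * c k) = pval N p x + s * pval N p c"
          by (simp add: pval_def sum.distrib sum_distrib_left algebra_simps)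
        ultimately show "Util N \<beta> u (\<lambda>k. x k + s * c k) \<le> Util N \<beta> u (\<lambda>k. x k + 0 * c k)"
          using is_demand_optimal[OF dem] is_demand_budget_binding[OF dem] \<open>pval N p c = 0\<close> by simp
      qed
    qed
    moreover have "(\<Sum>k=0..N. \<beta>^k * (u1 k (x k) * c k)) = \<beta>^n * u1 n (x n) - u1 0 (x 0) * p n"
      using n by (simp add: sum_atLeast0_split c_def if_distrib sum.If_cases)
    ultimately show ?thesis using False by (simp add: numeraire_price_def)
  qed simp
qed

definition risk_tolerance :: "(nat \<Rightarrow> real) \<Rightarrow> nat \<Rightarrow> real" where
  "risk_tolerance x k = u1 k (x k) / - u2 k (x k)"

text \<open>Frisch demand, \<mu> being the marginal utility of the numeraire: good k is consumed up to the
  point where its discounted marginal utility equals \<mu> times its price.\<close>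
definition frisch_demand :: "real \<Rightarrow> (nat \<Rightarrow> real) \<Rightarrow> nat \<Rightarrow> real" where
  "frisch_demand \<mu> p k =
     (if k \<le> N then regular_utility.marginal_inv (u1 k) (\<mu> * numeraire_price p k / \<beta>^k) else 0)"

definition frisch_admissible :: "real \<Rightarrow> (nat \<Rightarrow> real) \<Rightarrow> bool" where
  "frisch_admissible \<mu> p \<longleftrightarrow> (\<forall>k\<le>N. \<mu> * numeraire_price p k / \<beta>^k \<in> u1 k ` {0<..})"

lemma risk_tolerance_pos: "x \<in> cons_set N \<Longrightarrow> k \<le> N \<Longrightarrow> 0 < risk_tolerance x k"
  using regular_utility.marginal_pos[OF regular] regular_utility.second_derivative_neg[OF regular]
  by (auto simp: risk_tolerance_def cons_set_def divide_pos_neg)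

lemma
  assumes "frisch_admissible \<mu> p"
  shows frisch_admissible_multiplier_pos: "0 < \<mu>"
    and frisch_admissible_prices_pos: "\<forall>n\<in>{1..N}. 0 < p n"
proof -
  have arg_pos: "0 < \<mu> * numeraire_price p k / \<beta>^k" if "k \<le> N" for k
    using assms that regular_utility.marginal_image_pos[OF regular] by (auto simp: frisch_admissible_def)
  show "0 < \<mu>" using arg_pos[of 0] by simp
  show "\<forall>n\<in>{1..N}. 0 < p n"
  proof
    fix n assume "n \<in> {1..N}"
    then show "0 < p n"
      using arg_pos[of n] \<open>0 < \<mu>\<close> discount_pos
      by (simp add: numeraire_price_def zero_less_divide_iff zero_less_mult_iff)
  qed
qed

lemma
  assumes "frisch_admissible \<mu> p"
  shows frisch_demand_cons_set: "frisch_demand \<mu> p \<in> cons_set N"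
    and frisch_demand_marginal: "k \<le> N \<Longrightarrow> \<beta>^k * u1 k (frisch_demand \<mu> p k) = \<mu> * numeraire_price p k"
  using assms regular_utility.marginal_inv_pos[OF regular] regular_utility.marginal_marginal_inv[OF regular]
    discount_pos
  by (auto simp: frisch_demand_def frisch_admissible_def cons_set_def)

lemma demand_eq_frisch_demand:
  assumes "frisch_admissible \<mu> p" "pval N p (frisch_demand \<mu> p) = pval N p w"
  shows "demand N \<beta> u w p = frisch_demand \<mu> p"
  using demand_eqI[OF frisch_demand_cons_set] frisch_demand_marginal assms by blast

lemma is_demand_frisch:
  assumes "is_demand N \<beta> u w p x"
  shows "frisch_admissible (u1 0 (x 0)) p" and "frisch_demand (u1 0 (x 0)) p = x"
proof -
  have x: "x \<in> cons_set N" using is_demand_cons_set[OF assms] .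
  have marginal: "u1 k (x k) = u1 0 (x 0) * numeraire_price p k / \<beta>^k" if "k \<le> N" for k
    using is_demand_first_order[OF assms] that discount_pos by (simp add: field_simps)
  show "frisch_admissible (u1 0 (x 0)) p"
    unfolding frisch_admissible_def
  proof (intro allI impI)
    fix k assume "k \<le> N"
    then show "u1 0 (x 0) * numeraire_price p k / \<beta>^k \<in> u1 k ` {0<..}"
      using marginal[OF \<open>k \<le> N\<close>, symmetric] x by (auto simp: cons_set_def)
  qed
  show "frisch_demand (u1 0 (x 0)) p = x"
  proof
    fix k show "frisch_demand (u1 0 (x 0)) p k = x k"
      using x marginal[symmetric] regular_utility.marginal_inv_marginal[OF regular]
      by (auto simp: frisch_demand_def cons_set_def)
  qed
qed

lemma frisch_expenditure_strict_decreasing: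
  assumes "frisch_admissible \<mu> p" "frisch_admissible \<mu>' p" "\<mu> < \<mu>'"
  shows "pval N p (frisch_demand \<mu>' p) < pval N p (frisch_demand \<mu> p)"
  unfolding pval_eq_sum
proof (rule sum_strict_mono)
  fix k assume k: "k \<in> {0..N}"
  have "0 < numeraire_price p k"
    using frisch_admissible_prices_pos[OF assms(1)] k by (auto simp: numeraire_price_def)
  then have "\<mu> * numeraire_price p k / \<beta>^k < \<mu>' * numeraire_price p k / \<beta>^k"
    using \<open>\<mu> < \<mu>'\<close> discount_pos by (simp add: divide_strict_right_mono)
  then have "frisch_demand \<mu>' p k < frisch_demand \<mu> p k"
    using regular_utility.marginal_inv_strict_decreasing[OF regular] assms(1,2) k
    by (auto simp: frisch_demand_def frisch_admissible_def)
  then show "numeraire_price p k * frisch_demand \<mu>' p k < numeraire_price p k * frisch_demand \<mu> p k"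
    using \<open>0 < numeraire_price p k\<close> by simp
qed simp_all

lemma isCont_frisch_demand:
  assumes "m \<noteq> 0" "frisch_admissible (fst z) (p(m := snd z))" "k \<le> N"
  shows "isCont (\<lambda>z. frisch_demand (fst z) (p(m := snd z)) k) z"
proof -
  have "isCont (\<lambda>z. fst z * numeraire_price (p(m := snd z)) k / \<beta>^k) z"
    using \<open>m \<noteq> 0\<close> discount_pos by (cases "k = m") (auto intro!: continuous_intros)
  moreover have "isCont (regular_utility.marginal_inv (u1 k))
      (fst z * numeraire_price (p(m := snd z)) k / \<beta>^k)"
    using regular_utility.isCont_marginal_inv[OF regular] assms by (simp add: frisch_admissible_def)
  ultimately have "isCont (\<lambda>z. regular_utility.marginal_inv (u1 k)
      (fst z * numeraire_price (p(m := snd z)) k / \<beta>^k)) z"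
    by (rule isCont_o2)
  then show ?thesis
    using \<open>k \<le> N\<close> by (simp add: frisch_demand_def)
qed

lemma isCont_frisch_expenditure:
  assumes "m \<noteq> 0" "frisch_admissible (fst z) (p(m := snd z))"
  shows "isCont (\<lambda>z. pval N (p(m := snd z)) (frisch_demand (fst z) (p(m := snd z)))) z"
  unfolding pval_eq_sum
proof (intro continuous_sum continuous_mult)
  fix k assume "k \<in> {0..N}"
  then show "isCont (\<lambda>z. frisch_demand (fst z) (p(m := snd z)) k) z"
    using isCont_frisch_demand assms by simp
  show "isCont (\<lambda>z. numeraire_price (p(m := snd z)) k) z"
    using \<open>m \<noteq> 0\<close> by (cases "k = m") (auto intro!: continuous_intros)
qed

lemma frisch_admissible_nhd:
  assumes "frisch_admissible \<mu>0 p" "m \<noteq> 0" "0 < p m"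
  obtains \<delta> where "0 < \<delta>"
    "\<And>\<mu> t. \<bar>\<mu> - \<mu>0\<bar> \<le> \<delta> \<Longrightarrow> \<bar>t - p m\<bar> \<le> \<delta> \<Longrightarrow> 0 < t \<and> frisch_admissible \<mu> (p(m := t))"
proof -
  define arg where "arg k = (\<lambda>z. fst z * numeraire_price (p(m := snd z)) k / \<beta>^k)" for k
  define U where "U = {z :: real \<times> real. 0 < snd z} \<inter> (\<Inter>k\<in>{..N}. arg k -` (u1 k ` {0<..}))"
  have "isCont (arg k) z" for k z
    unfolding arg_def using \<open>m \<noteq> 0\<close> discount_pos
    by (cases "k = m") (auto intro!: continuous_intros)
  then have "open (arg k -` (u1 k ` {0<..}))" if "k \<le> N" for k
    using continuous_open_vimage regular_utility.open_marginal_image[OF regular[OF that]] by blast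
  then have "open U"
    unfolding U_def by (intro open_Int open_INT open_Collect_less continuous_intros) auto
  moreover have "(\<mu>0, p m) \<in> U"
    using assms by (auto simp: U_def arg_def frisch_admissible_def simp del: numeraire_price_update)
  ultimately obtain \<rho> where "0 < \<rho>" and \<rho>: "ball (\<mu>0, p m) \<rho> \<subseteq> U"
    by (meson openE)
  show ?thesis
  proof (rule that[of "\<rho> / 3"])
    fix \<mu> t assume "\<bar>\<mu> - \<mu>0\<bar> \<le> \<rho> / 3" "\<bar>t - p m\<bar> \<le> \<rho> / 3"
    then have "dist (\<mu>, t) (\<mu>0, p m) < \<rho>"
      using \<open>0 < \<rho>\<close> sqrt_sum_squares_le_sum_abs[of "\<mu> - \<mu>0" "t - p m"]
      by (simp add: dist_Pair_Pair dist_real_def)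
    then show "0 < t \<and> frisch_admissible \<mu> (p(m := t))"
      using \<rho> by (auto simp: U_def arg_def frisch_admissible_def dist_commute)
  qed (use \<open>0 < \<rho>\<close> in simp)
qed

lemma marginal_inv_has_derivative_risk_tolerance:
  assumes "x \<in> cons_set N" "k \<le> N"
  shows "(regular_utility.marginal_inv (u1 k) has_real_derivative - risk_tolerance x k / u1 k (x k))
           (at (u1 k (x k)))"
proof -
  have "0 < x k" using assms by (simp add: cons_set_def)
  then have "u1 k (x k) \<noteq> 0"
    using marginal_pos \<open>k \<le> N\<close> by (simp add: less_imp_neq[symmetric])
  then have "inverse (u2 k (x k)) = - risk_tolerance x k / u1 k (x k)"
    by (simp add: risk_tolerance_def field_simps)
  with regular_utility.marginal_inv_has_derivative[OF regular[OF \<open>k \<le> N\<close>] \<open>0 < x k\<close>]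
  show ?thesis by simp
qed

lemma frisch_demand_has_derivative:
  assumes adm: "frisch_admissible \<mu>0 p" and "m \<in> {1..N}" "k \<le> N"
    and x: "x = frisch_demand \<mu>0 p"
  shows "((\<lambda>z. frisch_demand (fst z) (p(m := snd z)) k) has_derivative
           (\<lambda>v. - risk_tolerance x k * (fst v / \<mu>0 + (if k = m then snd v / p m else 0)))) (at (\<mu>0, p m))"
proof -
  have "0 < \<mu>0" "0 < numeraire_price p k"
    using frisch_admissible_multiplier_pos[OF adm] frisch_admissible_prices_pos[OF adm] \<open>k \<le> N\<close>
    by (auto simp: numeraire_price_def)
  have marginal: "u1 k (x k) = \<mu>0 * numeraire_price p k / \<beta>^k"
    using frisch_demand_marginal[OF adm \<open>k \<le> N\<close>] discount_pos x by (simp add: field_simps)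
  define arg where "arg z = fst z * numeraire_price (p(m := snd z)) k / \<beta>^k" for z
  have "(arg has_derivative
      (\<lambda>v. (fst v * numeraire_price p k + (if k = m then \<mu>0 * snd v else 0)) / \<beta>^k)) (at (\<mu>0, p m))"
    unfolding arg_def using \<open>m \<in> {1..N}\<close> discount_pos
    by (cases "k = m") (auto intro!: derivative_eq_intros ext simp: field_simps numeraire_price_def)
  moreover have "(regular_utility.marginal_inv (u1 k) has_real_derivative
      - risk_tolerance x k / u1 k (x k)) (at (arg (\<mu>0, p m)))"
  proof -
    have "arg (\<mu>0, p m) = u1 k (x k)" by (simp add: arg_def marginal)
    moreover have "x \<in> cons_set N" using frisch_demand_cons_set[OF adm] x by simp
    ultimately show ?thesis
      using marginal_inv_has_derivative_risk_tolerance[OF _ \<open>k \<le> N\<close>] by simp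
  qed
  ultimately have "((\<lambda>z. regular_utility.marginal_inv (u1 k) (arg z)) has_derivative
      (\<lambda>v. (fst v * numeraire_price p k + (if k = m then \<mu>0 * snd v else 0)) / \<beta>^k
            * (- risk_tolerance x k / u1 k (x k)))) (at (\<mu>0, p m))"
    by (rule DERIV_compose_FDERIV[rotated])
  moreover have "(\<lambda>v. (fst v * numeraire_price p k + (if k = m then \<mu>0 * snd v else 0)) / \<beta>^k
        * (- risk_tolerance x k / u1 k (x k)))
      = (\<lambda>v. - risk_tolerance x k * (fst v / \<mu>0 + (if k = m then snd v / p m else 0)))"
    using \<open>0 < \<mu>0\<close> \<open>0 < numeraire_price p k\<close> discount_pos \<open>m \<in> {1..N}\<close> marginal
    by (cases "k = m") (auto simp: numeraire_price_def field_simps fun_eq_iff)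
  ultimately show ?thesis
    using \<open>k \<le> N\<close> by (simp add: frisch_demand_def arg_def)
qed

lemma frisch_expenditure_has_derivative:
  assumes adm: "frisch_admissible \<mu>0 p" and m: "m \<in> {1..N}" and x: "x = frisch_demand \<mu>0 p"
  shows "((\<lambda>z. pval N (p(m := snd z)) (frisch_demand (fst z) (p(m := snd z)))) has_derivative
      (\<lambda>v. - (\<Sum>k=0..N. numeraire_price p k * risk_tolerance x k) / \<mu>0 * fst v
           + (x m - risk_tolerance x m) * snd v)) (at (\<mu>0, p m))"
proof -
  have "0 < p m" using frisch_admissible_prices_pos[OF adm] m by blast
  have price: "((\<lambda>z. numeraire_price (p(m := snd z)) k) has_derivative
      (\<lambda>v. if k = m then snd v else 0)) (at (\<mu>0, p m))" for k
    using m by (cases "k = m") (auto intro!: derivative_eq_intros)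
  have "((\<lambda>z. \<Sum>k=0..N. numeraire_price (p(m := snd z)) k * frisch_demand (fst z) (p(m := snd z)) k)
      has_derivative (\<lambda>v. \<Sum>k=0..N. numeraire_price p k
          * (- risk_tolerance x k * (fst v / \<mu>0 + (if k = m then snd v / p m else 0)))
        + (if k = m then snd v else 0) * x k)) (at (\<mu>0, p m))"
    by (rule has_derivative_sum, rule has_derivative_eq_rhs,
        rule has_derivative_mult[OF price frisch_demand_has_derivative[OF adm m _ x]]) (auto simp: x)
  moreover have "(\<Sum>k=0..N. numeraire_price p k
          * (- risk_tolerance x k * (fst v / \<mu>0 + (if k = m then snd v / p m else 0)))
        + (if k = m then snd v else 0) * x k)
      = - (\<Sum>k=0..N. numeraire_price p k * risk_tolerance x k) / \<mu>0 * fst v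
        + (x m - risk_tolerance x m) * snd v" for v
  proof -
    have "(\<Sum>k=0..N. numeraire_price p k
          * (- risk_tolerance x k * (fst v / \<mu>0 + (if k = m then snd v / p m else 0)))
        + (if k = m then snd v else 0) * x k)
      = (\<Sum>k=0..N. (if k = m then (x m - risk_tolerance x m) * snd v else 0)
          - numeraire_price p k * risk_tolerance x k * fst v / \<mu>0)"
      using m \<open>0 < p m\<close> by (intro sum.cong) (auto simp: numeraire_price_def field_simps)
    also have "\<dots> = (x m - risk_tolerance x m) * snd v
        - (\<Sum>k=0..N. numeraire_price p k * risk_tolerance x k) * fst v / \<mu>0"
      using m by (simp add: sum_subtractf sum_divide_distrib[symmetric] sum_distrib_right[symmetric])
    finally show ?thesis by simp
  qed
  ultimately show ?thesis
    unfolding pval_eq_sum by simp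
qed

lemma is_demand_total_risk_tolerance_pos:
  assumes "is_demand N \<beta> u w p x"
  shows "0 < (\<Sum>k=0..N. numeraire_price p k * risk_tolerance x k)"
proof (rule sum_pos)
  fix k assume "k \<in> {0..N}"
  moreover have "x \<in> cons_set N" using is_demand_cons_set[OF assms] .
  ultimately show "0 < numeraire_price p k * risk_tolerance x k"
    using is_demand_prices_pos[OF assms] risk_tolerance_pos by (auto simp: numeraire_price_def)
qed simp_all

lemma frisch_multiplier_continuous:
  assumes dem: "is_demand N \<beta> u w p x" and m: "m \<in> {1..N}"
  obtains l where "l (p m) = u1 0 (x 0)" "isCont l (p m)"
    "\<forall>\<^sub>F t in nhds (p m). frisch_admissible (l t) (p(m := t))
       \<and> pval N (p(m := t)) (frisch_demand (l t) (p(m := t))) = pval N (p(m := t)) w"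
proof -
  define \<mu>0 where "\<mu>0 = u1 0 (x 0)"
  define G where "G \<mu> t = pval N (p(m := t)) (frisch_demand \<mu> (p(m := t))) - pval N (p(m := t)) w"
    for \<mu> t
  have adm: "frisch_admissible \<mu>0 p" and x: "x = frisch_demand \<mu>0 p"
    using is_demand_frisch[OF dem] by (simp_all add: \<mu>0_def)
  have "0 < p m" "m \<noteq> 0" using is_demand_prices_pos[OF dem] m by auto
  obtain \<delta> where "0 < \<delta>" and near: "\<And>\<mu> t. \<bar>\<mu> - \<mu>0\<bar> \<le> \<delta> \<Longrightarrow> \<bar>t - p m\<bar> \<le> \<delta>
      \<Longrightarrow> 0 < t \<and> frisch_admissible \<mu> (p(m := t))"
    using frisch_admissible_nhd[OF adm \<open>m \<noteq> 0\<close> \<open>0 < p m\<close>] by blast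
  have cont: "isCont (\<lambda>z. G (fst z) (snd z)) (\<mu>, t)" if "\<bar>\<mu> - \<mu>0\<bar> \<le> \<delta>" "\<bar>t - p m\<bar> \<le> \<delta>" for \<mu> t
    unfolding G_def pval_price_update[OF m, of p _ w]
    using isCont_frisch_expenditure[of m "(\<mu>, t)"] near[OF that] \<open>m \<noteq> 0\<close>
    by (intro continuous_intros) auto
  obtain l where "l (p m) = \<mu>0" "isCont l (p m)"
    and roots: "\<forall>\<^sub>F t in nhds (p m). \<bar>l t - \<mu>0\<bar> < \<delta> \<and> G (l t) t = 0"
  proof (rule decreasing_family_continuous_root[OF \<open>0 < \<delta>\<close>])
    show "G \<mu>' t < G \<mu> t" if "\<bar>t - p m\<bar> < \<delta>" "\<mu>0 - \<delta> \<le> \<mu>" "\<mu> < \<mu>'" "\<mu>' \<le> \<mu>0 + \<delta>" for t \<mu> \<mu>'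
      using frisch_expenditure_strict_decreasing[of \<mu> "p(m := t)" \<mu>'] near[of \<mu> t] near[of \<mu>' t] that
      by (simp add: G_def)
    show "continuous_on {\<mu>0-\<delta>..\<mu>0+\<delta>} (\<lambda>\<mu>. G \<mu> t)" if "\<bar>t - p m\<bar> < \<delta>" for t
    proof (intro continuous_at_imp_continuous_on ballI)
      fix \<mu> assume "\<mu> \<in> {\<mu>0-\<delta>..\<mu>0+\<delta>}"
      then show "isCont (\<lambda>\<mu>. G \<mu> t) \<mu>"
        using isCont_o2[where f="\<lambda>\<mu>. (\<mu>, t)" and a=\<mu> and g="\<lambda>z. G (fst z) (snd z)"]
          cont[of \<mu> t] that
        by (auto simp: abs_le_iff abs_less_iff continuous_intros)
    qed
    show "isCont (G \<mu>) (p m)" if "\<mu>0 - \<delta> \<le> \<mu>" "\<mu> \<le> \<mu>0 + \<delta>" for \<mu>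
      using isCont_o2[where f="\<lambda>t. (\<mu>, t)" and a="p m" and g="\<lambda>z. G (fst z) (snd z)"]
        cont[of \<mu> "p m"] that \<open>0 < \<delta>\<close>
      by (simp add: abs_le_iff continuous_intros)
    show "G \<mu>0 (p m) = 0"
      using is_demand_budget_binding[OF dem] x by (simp add: G_def)
  qed
  moreover have "\<forall>\<^sub>F t in nhds (p m). \<bar>t - p m\<bar> < \<delta>"
    using eventually_nhds_metric[of _ "p m"] \<open>0 < \<delta>\<close> by (auto simp: dist_real_def)
  with roots have "\<forall>\<^sub>F t in nhds (p m). frisch_admissible (l t) (p(m := t))
       \<and> pval N (p(m := t)) (frisch_demand (l t) (p(m := t))) = pval N (p(m := t)) w"
    by eventually_elim (use near in \<open>auto simp: G_def\<close>)
  ultimately show ?thesis using that by (simp add: \<mu>0_def)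
qed

lemma frisch_multiplier_has_derivative:
  assumes dem: "is_demand N \<beta> u w p x" and m: "m \<in> {1..N}"
  obtains l where "l (p m) = u1 0 (x 0)"
    "(l has_real_derivative u1 0 (x 0) * (x m - w m - risk_tolerance x m)
       / (\<Sum>k=0..N. numeraire_price p k * risk_tolerance x k)) (at (p m))"
    "\<forall>\<^sub>F t in nhds (p m). demand N \<beta> u w (p(m := t)) = frisch_demand (l t) (p(m := t))"
proof -
  define \<mu>0 where "\<mu>0 = u1 0 (x 0)"
  define R where "R = (\<Sum>k=0..N. numeraire_price p k * risk_tolerance x k)"
  define G where "G \<mu> t = pval N (p(m := t)) (frisch_demand \<mu> (p(m := t))) - (pval N p w + (t - p m) * w m)"
    for \<mu> t
  have adm: "frisch_admissible \<mu>0 p" and x: "x = frisch_demand \<mu>0 p"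
    using is_demand_frisch[OF dem] by (simp_all add: \<mu>0_def)
  have "0 < \<mu>0" "0 < R"
    using frisch_admissible_multiplier_pos[OF adm] is_demand_total_risk_tolerance_pos[OF dem]
    by (simp_all add: R_def)
  obtain l where l: "l (p m) = \<mu>0" "isCont l (p m)"
    and budget: "\<forall>\<^sub>F t in nhds (p m). frisch_admissible (l t) (p(m := t))
       \<and> pval N (p(m := t)) (frisch_demand (l t) (p(m := t))) = pval N (p(m := t)) w"
    using frisch_multiplier_continuous[OF dem m] unfolding \<mu>0_def by blast
  have "((\<lambda>z. G (fst z) (snd z)) has_derivative
      (\<lambda>v. - (R / \<mu>0) * fst v + (x m - risk_tolerance x m - w m) * snd v)) (at (\<mu>0, p m))"
    unfolding G_def
    by (rule has_derivative_eq_rhs[OF has_derivative_diff[OF frisch_expenditure_has_derivative[OF adm m x]]])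
       (auto intro!: derivative_eq_intros simp: R_def algebra_simps)
  then have "(l has_real_derivative - (x m - risk_tolerance x m - w m) / - (R / \<mu>0)) (at (p m))"
  proof (rule implicit_function_has_real_derivative[OF _ _ _ l(2,1)])
    show "- (R / \<mu>0) \<noteq> 0" using \<open>0 < R\<close> \<open>0 < \<mu>0\<close> by simp
    show "G \<mu>0 (p m) = 0"
      using is_demand_budget_binding[OF dem] x by (simp add: G_def)
    show "\<forall>\<^sub>F t in nhds (p m). G (l t) t = 0"
      using budget by (auto simp: G_def pval_price_update[OF m, of p _ w] elim: eventually_mono)
  qed
  moreover have "- (x m - risk_tolerance x m - w m) / - (R / \<mu>0) = \<mu>0 * (x m - w m - risk_tolerance x m) / R"
    using \<open>0 < \<mu>0\<close> \<open>0 < R\<close> by (simp add: field_simps)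
  moreover have "\<forall>\<^sub>F t in nhds (p m). demand N \<beta> u w (p(m := t)) = frisch_demand (l t) (p(m := t))"
    using budget by (auto intro: demand_eq_frisch_demand elim: eventually_mono)
  ultimately show ?thesis using that l(1) by (simp add: \<mu>0_def R_def)
qed

lemma demand_has_derivative:
  assumes dem: "is_demand N \<beta> u w p x" and m: "m \<in> {1..N}" and n: "n \<in> {1..N}"
  shows "((\<lambda>t. demand N \<beta> u w (p(m := t)) n) has_real_derivative
      - risk_tolerance x n * ((x m - w m - risk_tolerance x m)
          / (\<Sum>k=0..N. numeraire_price p k * risk_tolerance x k) + (if n = m then 1 / p n else 0)))
      (at (p m))"
proof -
  define \<mu>0 R where "\<mu>0 = u1 0 (x 0)" and "R = (\<Sum>k=0..N. numeraire_price p k * risk_tolerance x k)"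
  define l' where "l' = \<mu>0 * (x m - w m - risk_tolerance x m) / R"
  obtain l where l: "l (p m) = \<mu>0" "(l has_real_derivative l') (at (p m))"
    and demand_eq: "\<forall>\<^sub>F t in nhds (p m). demand N \<beta> u w (p(m := t)) = frisch_demand (l t) (p(m := t))"
    using frisch_multiplier_has_derivative[OF dem m] unfolding \<mu>0_def R_def l'_def by blast
  have adm: "frisch_admissible \<mu>0 p" and x: "x = frisch_demand \<mu>0 p"
    using is_demand_frisch[OF dem] by (simp_all add: \<mu>0_def)
  have "0 < \<mu>0" using frisch_admissible_multiplier_pos[OF adm] .
  have "0 < R" unfolding R_def by (rule is_demand_total_risk_tolerance_pos[OF dem])
  have "((\<lambda>t. (l t, t)) has_derivative (\<lambda>h. (l' * h, h))) (at (p m))"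
    using l(2) by (auto intro!: derivative_eq_intros simp: has_field_derivative_def)
  from has_derivative_compose[OF this frisch_demand_has_derivative[OF adm m _ x, of n, folded l(1)]]
  have "((\<lambda>t. frisch_demand (l t) (p(m := t)) n) has_derivative
      (\<lambda>h. - risk_tolerance x n * (l' * h / \<mu>0 + (if n = m then h / p m else 0)))) (at (p m))"
    using n l(1) by (cases "n = m") simp_all
  moreover have "(\<lambda>h. - risk_tolerance x n * (l' * h / \<mu>0 + (if n = m then h / p m else 0)))
      = (*) (- risk_tolerance x n * ((x m - w m - risk_tolerance x m) / R + (if n = m then 1 / p n else 0)))"
    using \<open>0 < \<mu>0\<close> \<open>0 < R\<close> by (auto simp: l'_def field_simps fun_eq_iff)
  ultimately have frisch_deriv: "((\<lambda>t. frisch_demand (l t) (p(m := t)) n) has_real_derivative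
      - risk_tolerance x n * ((x m - w m - risk_tolerance x m) / R + (if n = m then 1 / p n else 0)))
      (at (p m))"
    by (simp add: has_field_derivative_def)
  have "\<forall>\<^sub>F t in nhds (p m). demand N \<beta> u w (p(m := t)) n = frisch_demand (l t) (p(m := t)) n"
    using demand_eq by (rule eventually_mono) simp
  from iffD2[OF DERIV_cong_ev[OF refl this refl] frisch_deriv] show ?thesis
    unfolding R_def .
qed

end

section \<open>The quadratic form of an agent's demand Jacobian\<close>

lemma quadratic_form_rank_one_plus_diagonal:
  fixes q \<mu> r p :: "nat \<Rightarrow> real"
  assumes "finite A"
  shows "(\<Sum>m\<in>A. \<Sum>n\<in>A. q m * (- r n * (\<mu> m + (if n = m then 1 / p n else 0))) * q n)
       = - (\<Sum>m\<in>A. q m * \<mu> m) * (\<Sum>n\<in>A. r n * q n) - (\<Sum>m\<in>A. r m / p m * q m^2)"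
proof -
  have "(\<Sum>n\<in>A. q m * (- r n * (\<mu> m + (if n = m then 1 / p n else 0))) * q n)
      = - (q m * \<mu> m) * (\<Sum>n\<in>A. r n * q n) - r m / p m * q m^2" if "m \<in> A" for m
  proof -
    have "(\<Sum>n\<in>A. q m * (- r n * (\<mu> m + (if n = m then 1 / p n else 0))) * q n)
        = (\<Sum>n\<in>A. - (q m * \<mu> m) * (r n * q n) - (if n = m then r n * q n * q n / p n else 0))"
      by (rule sum.cong) (auto simp: algebra_simps)
    then show ?thesis
      using that \<open>finite A\<close>
      by (simp add: sum_subtractf sum_distrib_left power2_eq_square mult.assoc)
  qed
  then have "(\<Sum>m\<in>A. \<Sum>n\<in>A. q m * (- r n * (\<mu> m + (if n = m then 1 / p n else 0))) * q n)
      = (\<Sum>m\<in>A. - (q m * \<mu> m) * (\<Sum>n\<in>A. r n * q n) - r m / p m * q m^2)"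
    by (rule sum.cong[OF refl])
  then show ?thesis
    by (simp only: mult_minus_left sum_subtractf sum_negf sum_distrib_right[symmetric])
qed

lemma weighted_square_sum:
  fixes r p v :: "nat \<Rightarrow> real"
  assumes "\<forall>n\<in>A. p n \<noteq> 0"
  shows "(\<Sum>n\<in>A. r n / p n * (v n + c * p n)^2)
    = (\<Sum>n\<in>A. r n * v n^2 / p n) + 2 * c * (\<Sum>n\<in>A. r n * v n) + c^2 * (\<Sum>n\<in>A. p n * r n)"
proof -
  have "(\<Sum>n\<in>A. r n / p n * (v n + c * p n)^2)
      = (\<Sum>n\<in>A. r n * v n^2 / p n + 2 * c * (r n * v n) + c^2 * (p n * r n))"
    using assms by (intro sum.cong) (auto simp: field_simps power2_eq_square)
  then show ?thesis by (simp add: sum.distrib sum_distrib_left)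
qed

lemma demand_jacobian_quadratic_form:
  fixes r p x w v :: "nat \<Rightarrow> real" and \<alpha> :: real and N :: nat
  defines "\<rho> \<equiv> \<Sum>n=1..N. p n * r n"
    and "\<rho>t \<equiv> r 0 + (\<Sum>n=1..N. p n * r n)"
    and "\<Lambda> \<equiv> (\<Sum>n=1..N. r n * v n) / (\<Sum>n=1..N. p n * r n)"
  assumes p_pos: "\<forall>n\<in>{1..N}. p n \<noteq> 0" and "\<rho> \<noteq> 0" "\<rho>t \<noteq> 0"
    and budget: "(\<Sum>m=1..N. p m * (x m - w m)) = w 0 - x 0"
  shows "(\<Sum>m=1..N. \<Sum>n=1..N. (\<alpha> * p m + v m)
            * (- r n * ((x m - w m - r m) / \<rho>t + (if n = m then 1 / p n else 0))) * (\<alpha> * p n + v n))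
    = - (\<rho> / \<rho>t * (r 0 + w 0 - x 0)) * \<alpha>^2
      + (r 0 / \<rho>t * (\<Sum>m=1..N. (x m - w m) * v m) - (2 * r 0 + w 0 - x 0) / \<rho>t * \<rho> * \<Lambda>
         - (\<Sum>m=1..N. (x m - w m) * v m)) * \<alpha>
      - (\<Sum>n=1..N. r n / p n * (v n - p n * \<Lambda>)^2)
      + \<rho> / \<rho>t * \<Lambda> * ((\<Sum>m=1..N. (w m - x m) * v m) - r 0 * \<Lambda>)"
proof -
  define q where "q n = \<alpha> * p n + v n" for n
  define b where "b = (\<Sum>m=1..N. (x m - w m) * v m)"
  define T where "T = (\<Sum>n=1..N. r n * v n^2 / p n)"
  have rv: "(\<Sum>n=1..N. r n * v n) = \<rho> * \<Lambda>" using \<open>\<rho> \<noteq> 0\<close> by (simp add: \<Lambda>_def \<rho>_def)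
  have rq: "(\<Sum>n=1..N. r n * q n) = \<alpha> * \<rho> + \<rho> * \<Lambda>"
    unfolding q_def using rv by (simp add: \<rho>_def algebra_simps sum.distrib sum_distrib_left)
  have "(\<Sum>m=1..N. q m * (x m - w m)) = (\<Sum>m=1..N. \<alpha> * (p m * (x m - w m)) + (x m - w m) * v m)"
    by (rule sum.cong) (simp_all add: q_def algebra_simps)
  then have "(\<Sum>m=1..N. q m * (x m - w m)) = \<alpha> * (\<Sum>m=1..N. p m * (x m - w m)) + b"
    by (simp add: b_def sum.distrib sum_distrib_left)
  then have "(\<Sum>m=1..N. q m * (x m - w m)) = \<alpha> * (w 0 - x 0) + b" using budget by simp
  moreover have "(\<Sum>m=1..N. q m * ((x m - w m - r m) / \<rho>t)) = (\<Sum>m=1..N. q m * (x m - w m) - r m * q m) / \<rho>t"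
    by (simp add: sum_divide_distrib algebra_simps)
  ultimately have q\<mu>: "(\<Sum>m=1..N. q m * ((x m - w m - r m) / \<rho>t))
      = (\<alpha> * (w 0 - x 0) + b - (\<alpha> * \<rho> + \<rho> * \<Lambda>)) / \<rho>t"
    using rq by (simp add: sum_subtractf)
  have rq2: "(\<Sum>m=1..N. r m / p m * q m^2) = \<alpha>^2 * \<rho> + 2 * \<alpha> * \<rho> * \<Lambda> + T"
  proof -
    have "(\<Sum>m=1..N. r m / p m * q m^2) = (\<Sum>m=1..N. r m / p m * (v m + \<alpha> * p m)^2)"
      by (simp add: q_def add.commute)
    then show ?thesis
      using weighted_square_sum[of "{1..N}" p r v \<alpha>] p_pos rv by (simp add: \<rho>_def T_def algebra_simps)
  qed
  have S: "(\<Sum>n=1..N. r n / p n * (v n - p n * \<Lambda>)^2) = T - \<rho> * \<Lambda>^2"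
  proof -
    have "(\<Sum>n=1..N. r n / p n * (v n - p n * \<Lambda>)^2) = (\<Sum>n=1..N. r n / p n * (v n + (- \<Lambda>) * p n)^2)"
      by (simp add: mult.commute)
    then show ?thesis
      using weighted_square_sum[of "{1..N}" p r v "- \<Lambda>"] p_pos rv
      by (simp add: \<rho>_def T_def power2_eq_square algebra_simps)
  qed
  have wx: "(\<Sum>m=1..N. (w m - x m) * v m) = - b"
    unfolding b_def by (simp add: sum_negf[symmetric] algebra_simps)
  have "(\<Sum>m=1..N. \<Sum>n=1..N. (\<alpha> * p m + v m)
            * (- r n * ((x m - w m - r m) / \<rho>t + (if n = m then 1 / p n else 0))) * (\<alpha> * p n + v n))
      = - ((\<alpha> * (w 0 - x 0) + b - (\<alpha> * \<rho> + \<rho> * \<Lambda>)) / \<rho>t) * (\<alpha> * \<rho> + \<rho> * \<Lambda>)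
        - (\<alpha>^2 * \<rho> + 2 * \<alpha> * \<rho> * \<Lambda> + T)"
    using quadratic_form_rank_one_plus_diagonal[where A="{1..N}" and q=q and r=r and p=p
          and \<mu>="\<lambda>m. (x m - w m - r m) / \<rho>t"]
    by (simp only: q_def[symmetric] q\<mu> rq rq2 finite_atLeastAtMost)
  also have "\<dots> = - (\<rho> / \<rho>t * (r 0 + w 0 - x 0)) * \<alpha>^2
      + (r 0 / \<rho>t * b - (2 * r 0 + w 0 - x 0) / \<rho>t * \<rho> * \<Lambda> - b) * \<alpha>
      - (T - \<rho> * \<Lambda>^2) + \<rho> / \<rho>t * \<Lambda> * (- b - r 0 * \<Lambda>)"
  proof -
    have r0: "r 0 = \<rho>t - \<rho>" by (simp add: \<rho>t_def \<rho>_def)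
    show ?thesis unfolding r0 using \<open>\<rho>t \<noteq> 0\<close> by (simp add: field_simps power2_eq_square)
  qed
  finally show ?thesis unfolding S wx b_def .
qed

section \<open>Aggregation over agents\<close>

lemma Lam_linear:
  "Lam N pb u1 u2 xb i (\<lambda>n. a * f n + g n) = a * Lam N pb u1 u2 xb i f + Lam N pb u1 u2 xb i g"
  by (simp add: Lam_def algebra_simps sum.distrib sum_distrib_left add_divide_distrib)

lemma Psi_linear:
  "Psi I N pb u1 u2 \<omega> xb (\<lambda>n. a * f n + g n) = a * Psi I N pb u1 u2 \<omega> xb f + Psi I N pb u1 u2 \<omega> xb g"
  unfolding Psi_def Lam_linear distrib_left sum.distrib by (simp add: sum_distrib_left mult.left_commute)

lemma Psi_cong: "\<forall>n\<in>{1..N}. f n = g n \<Longrightarrow> Psi I N pb u1 u2 \<omega> xb f = Psi I N pb u1 u2 \<omega> xb g"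
  by (simp add: Psi_def Lam_def)

lemma unique_decomposition_along:
  fixes \<Phi> :: "(nat \<Rightarrow> real) \<Rightarrow> real" and p q :: "nat \<Rightarrow> real"
  assumes linear: "\<And>a f g. \<Phi> (\<lambda>n. a * f n + g n) = a * \<Phi> f + \<Phi> g"
    and supported: "\<And>f g. \<forall>n\<in>S. f n = g n \<Longrightarrow> \<Phi> f = \<Phi> g"
    and "\<Phi> p \<noteq> 0"
  shows "\<exists>!(\<alpha>, v). (\<forall>n. n \<notin> S \<longrightarrow> v n = 0) \<and> \<Phi> v = 0 \<and> (\<forall>n\<in>S. q n = \<alpha> * p n + v n)"
proof -
  have coefficient: "\<alpha> = \<Phi> q / \<Phi> p" if "\<Phi> v = 0" "\<forall>n\<in>S. q n = \<alpha> * p n + v n" for \<alpha> v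
  proof -
    have "\<Phi> q = \<Phi> (\<lambda>n. \<alpha> * p n + v n)" using that(2) by (intro supported) simp
    then show ?thesis using linear that(1) \<open>\<Phi> p \<noteq> 0\<close> by simp
  qed
  define \<alpha> where "\<alpha> = \<Phi> q / \<Phi> p"
  define v where "v n = (if n \<in> S then q n - \<alpha> * p n else 0)" for n
  have "\<Phi> v = \<Phi> (\<lambda>n. (- \<alpha>) * p n + q n)" by (intro supported) (simp add: v_def)
  also have "\<dots> = 0" using linear \<open>\<Phi> p \<noteq> 0\<close> by (simp only:) (simp add: \<alpha>_def)
  finally have "\<Phi> v = 0" .
  show ?thesis
  proof (rule ex1I[where a="(\<alpha>, v)"])
    show "case (\<alpha>, v) of (\<alpha>, v) \<Rightarrow> (\<forall>n. n \<notin> S \<longrightarrow> v n = 0) \<and> \<Phi> v = 0 \<and> (\<forall>n\<in>S. q n = \<alpha> * p n + v n)"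
      using \<open>\<Phi> v = 0\<close> by (simp add: v_def)
    fix z assume "case z of (\<alpha>', v') \<Rightarrow> (\<forall>n. n \<notin> S \<longrightarrow> v' n = 0) \<and> \<Phi> v' = 0 \<and> (\<forall>n\<in>S. q n = \<alpha>' * p n + v' n)"
    then obtain \<alpha>' v' where z: "z = (\<alpha>', v')" and "\<forall>n. n \<notin> S \<longrightarrow> v' n = 0" "\<Phi> v' = 0"
      "\<forall>n\<in>S. q n = \<alpha>' * p n + v' n"
      by (cases z) auto
    moreover from this have "\<alpha>' = \<alpha>" using coefficient by (simp add: \<alpha>_def)
    ultimately show "z = (\<alpha>, v)" by (auto simp: v_def fun_eq_iff)
  qed
qed

locale equilibrium_economy =
  fixes I :: "'a set" and N :: nat and \<beta> :: real
    and u u1 u2 :: "'a \<Rightarrow> nat \<Rightarrow> real \<Rightarrow> real" and \<omega> :: "'a \<Rightarrow> nat \<Rightarrow> real"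
    and pb :: "nat \<Rightarrow> real" and xb :: "'a \<Rightarrow> nat \<Rightarrow> real"
  assumes finite_agents: "finite I" and future_goods: "1 \<le> N"
    and consumer: "i \<in> I \<Longrightarrow> regular_consumer N \<beta> (u i) (u1 i) (u2 i)"
    and equilibrium: "competitive_equilibrium N \<beta> I u \<omega> pb xb"
begin

lemma is_demand: "i \<in> I \<Longrightarrow> is_demand N \<beta> (u i) (\<omega> i) pb (xb i)"
  using equilibrium by (simp add: competitive_equilibrium_def)

lemma prices_pos: "i \<in> I \<Longrightarrow> n \<in> {1..N} \<Longrightarrow> 0 < pb n"
  using regular_consumer.is_demand_prices_pos[OF consumer is_demand] by blast

lemma rbar_eq_risk_tolerance:
  "i \<in> I \<Longrightarrow> rbar u1 u2 xb i = regular_consumer.risk_tolerance (u1 i) (u2 i) (xb i)"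
  using regular_consumer.risk_tolerance_def[OF consumer] by (simp add: rbar_def fun_eq_iff)

lemma rbartot_eq_sum: "rbartot N pb u1 u2 xb i = (\<Sum>k=0..N. numeraire_price pb k * rbar u1 u2 xb i k)"
  by (simp add: rbartot_def rbar0_def sum_atLeast0_split numeraire_price_def)

lemma rbar_pos:
  assumes "i \<in> I" "k \<le> N" shows "0 < rbar u1 u2 xb i k"
  using regular_consumer.risk_tolerance_pos[OF consumer
      regular_consumer.is_demand_cons_set[OF consumer is_demand], OF assms(1,1,1,2)]
  by (simp add: rbar_eq_risk_tolerance[OF assms(1)])

lemma rbar0_pos: "i \<in> I \<Longrightarrow> 0 < rbar0 N pb u1 u2 xb i"
  unfolding rbar0_def using future_goods prices_pos rbar_pos by (intro sum_pos) auto

lemma rbartot_pos: "i \<in> I \<Longrightarrow> 0 < rbartot N pb u1 u2 xb i"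
  using rbar_pos[of i 0] rbar0_pos[of i] by (simp add: rbartot_def)

definition excess_jacobian :: "nat \<Rightarrow> nat \<Rightarrow> real" where
  "excess_jacobian m n = (\<Sum>i\<in>I. - rbar u1 u2 xb i n
     * ((xb i m - \<omega> i m - rbar u1 u2 xb i m) / rbartot N pb u1 u2 xb i + (if n = m then 1 / pb n else 0)))"

lemma excess_demand_has_derivative:
  assumes "m \<in> {1..N}" "n \<in> {1..N}"
  shows "((\<lambda>t. excess_demand N \<beta> I u \<omega> (pb(m := t)) n) has_real_derivative excess_jacobian m n) (at (pb m))"
  unfolding excess_demand_def excess_jacobian_def
proof (rule DERIV_sum)
  fix i assume "i \<in> I"
  from DERIV_diff[OF regular_consumer.demand_has_derivative[OF consumer[OF \<open>i \<in> I\<close>] is_demand[OF \<open>i \<in> I\<close>]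
      assms] DERIV_const[of "\<omega> i n"]]
  show "((\<lambda>t. demand N \<beta> (u i) (\<omega> i) (pb(m := t)) n - \<omega> i n) has_real_derivative
      - rbar u1 u2 xb i n * ((xb i m - \<omega> i m - rbar u1 u2 xb i m) / rbartot N pb u1 u2 xb i
        + (if n = m then 1 / pb n else 0))) (at (pb m))"
    using \<open>i \<in> I\<close> by (simp add: rbar_eq_risk_tolerance rbartot_eq_sum)
qed


lemma market_clearing_value: "(\<Sum>i\<in>I. \<Sum>m=1..N. (xb i m - \<omega> i m) * v m) = 0"
proof -
  have "(\<Sum>i\<in>I. \<Sum>m=1..N. (xb i m - \<omega> i m) * v m) = (\<Sum>m=1..N. ((\<Sum>i\<in>I. xb i m) - (\<Sum>i\<in>I. \<omega> i m)) * v m)"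
    by (subst sum.swap) (simp add: sum_distrib_right sum_subtractf left_diff_distrib)
  also have "\<dots> = 0"
    using equilibrium by (intro sum.neutral) (auto simp: competitive_equilibrium_def)
  finally show ?thesis .
qed

lemma excess_jacobian_quadratic_form:
  assumes "Psi I N pb u1 u2 \<omega> xb v = 0"
  shows "(\<Sum>m=1..N. \<Sum>n=1..N. (\<alpha> * pb m + v m) * excess_jacobian m n * (\<alpha> * pb n + v n))
      = - Acoef I N pb u1 u2 \<omega> xb * \<alpha>^2 + Rfun I N pb u1 u2 \<omega> xb v * \<alpha>
        - Sfun I N pb u1 u2 xb v + Mfun I N pb u1 u2 \<omega> xb v"
proof -
  let ?r = "rbar u1 u2 xb" and ?\<rho> = "rbar0 N pb u1 u2 xb" and ?rt = "rbartot N pb u1 u2 xb"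
    and ?\<Lambda> = "\<lambda>i. Lam N pb u1 u2 xb i v"
  define a where "a i = ?\<rho> i / ?rt i * (?r i 0 + \<omega> i 0 - xb i 0)" for i
  define b where "b i = ?r i 0 / ?rt i * (\<Sum>m=1..N. (xb i m - \<omega> i m) * v m)
      - (2 * ?r i 0 + \<omega> i 0 - xb i 0) / ?rt i * ?\<rho> i * ?\<Lambda> i - (\<Sum>m=1..N. (xb i m - \<omega> i m) * v m)" for i
  define c where "c i = (\<Sum>n=1..N. ?r i n / pb n * (v n - pb n * ?\<Lambda> i)^2)" for i
  define d where "d i = ?\<rho> i / ?rt i * ?\<Lambda> i * ((\<Sum>m=1..N. (\<omega> i m - xb i m) * v m) - ?r i 0 * ?\<Lambda> i)" for i
  have agent: "(\<Sum>m=1..N. \<Sum>n=1..N. (\<alpha> * pb m + v m)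
        * (- ?r i n * ((xb i m - \<omega> i m - ?r i m) / ?rt i + (if n = m then 1 / pb n else 0))) * (\<alpha> * pb n + v n))
      = - a i * \<alpha>^2 + b i * \<alpha> - c i + d i" if "i \<in> I" for i
  proof -
    have "(\<Sum>m=1..N. pb m * (xb i m - \<omega> i m)) = \<omega> i 0 - xb i 0"
      using regular_consumer.is_demand_budget_binding[OF consumer is_demand, OF that that]
      by (simp add: pval_def right_diff_distrib sum_subtractf)
    moreover have "\<forall>n\<in>{1..N}. pb n \<noteq> 0" using prices_pos[OF that] by fastforce
    ultimately show ?thesis
      unfolding a_def b_def c_def d_def Lam_def rbartot_def rbar0_def
      using demand_jacobian_quadratic_form[of N pb "?r i"] rbar0_pos[OF that] rbartot_pos[OF that]
      by (simp add: rbar0_def rbartot_def)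
  qed
  have "(\<Sum>m=1..N. \<Sum>n=1..N. (\<alpha> * pb m + v m) * excess_jacobian m n * (\<alpha> * pb n + v n))
      = (\<Sum>i\<in>I. \<Sum>m=1..N. \<Sum>n=1..N. (\<alpha> * pb m + v m)
        * (- ?r i n * ((xb i m - \<omega> i m - ?r i m) / ?rt i + (if n = m then 1 / pb n else 0))) * (\<alpha> * pb n + v n))"
    unfolding excess_jacobian_def sum_distrib_left sum_distrib_right
    by (subst sum.swap, rule sum.cong[OF refl], rule sum.swap)
  also have "\<dots> = (\<Sum>i\<in>I. - a i * \<alpha>^2 + b i * \<alpha> - c i + d i)"
    using agent by simp
  also have "\<dots> = - (\<Sum>i\<in>I. a i) * \<alpha>^2 + (\<Sum>i\<in>I. b i) * \<alpha> - (\<Sum>i\<in>I. c i) + (\<Sum>i\<in>I. d i)"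
    by (simp add: sum.distrib sum_subtractf sum_negf sum_distrib_right)
  also have "(\<Sum>i\<in>I. b i) = Rfun I N pb u1 u2 \<omega> xb v"
    using assms market_clearing_value[of v]
    by (simp add: b_def Rfun_def Psi_def sum_subtractf)
  finally show ?thesis
    by (simp add: a_def c_def d_def Acoef_def Sfun_def Mfun_def)
qed

lemma Acoef_le_Psi_prices: "Acoef I N pb u1 u2 \<omega> xb \<le> Psi I N pb u1 u2 \<omega> xb pb"
proof -
  have "Psi I N pb u1 u2 \<omega> xb pb = Acoef I N pb u1 u2 \<omega> xb
      + (\<Sum>i\<in>I. rbar u1 u2 xb i 0 * rbar0 N pb u1 u2 xb i / rbartot N pb u1 u2 xb i)"
    unfolding Psi_def Acoef_def sum.distrib[symmetric]
  proof (rule sum.cong[OF refl])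
    fix i assume "i \<in> I"
    then have "Lam N pb u1 u2 xb i pb = 1"
      using rbar0_pos[OF \<open>i \<in> I\<close>] by (simp add: Lam_def rbar0_def mult.commute)
    then show "(2 * rbar u1 u2 xb i 0 + \<omega> i 0 - xb i 0) / rbartot N pb u1 u2 xb i
        * rbar0 N pb u1 u2 xb i * Lam N pb u1 u2 xb i pb
      = rbar0 N pb u1 u2 xb i / rbartot N pb u1 u2 xb i * (rbar u1 u2 xb i 0 + \<omega> i 0 - xb i 0)
        + rbar u1 u2 xb i 0 * rbar0 N pb u1 u2 xb i / rbartot N pb u1 u2 xb i"
      using rbartot_pos[OF \<open>i \<in> I\<close>] by (simp add: field_simps)
  qed
  moreover have "0 \<le> (\<Sum>i\<in>I. rbar u1 u2 xb i 0 * rbar0 N pb u1 u2 xb i / rbartot N pb u1 u2 xb i)"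
    using rbar_pos rbar0_pos rbartot_pos by (intro sum_nonneg) (simp add: less_imp_le)
  ultimately show ?thesis by simp
qed

end

theorem proposition1:
  fixes I :: "'a set" and N :: nat and \<beta> :: real
    and u u1 u2 :: "'a \<Rightarrow> nat \<Rightarrow> real \<Rightarrow> real" and \<omega> :: "'a \<Rightarrow> nat \<Rightarrow> real"
    and pb :: "nat \<Rightarrow> real" and xb :: "'a \<Rightarrow> nat \<Rightarrow> real"
  assumes finI: "finite I" and N1: "1 \<le> N" and beta: "0 < \<beta>" "\<beta> < 1"
    and endow: "\<forall>i\<in>I. \<forall>n\<le>N. 0 \<le> \<omega> i n"
    and d1: "\<forall>i\<in>I. \<forall>n\<le>N. \<forall>x>0. (u i n has_real_derivative u1 i n x) (at x)"
    and d2: "\<forall>i\<in>I. \<forall>n\<le>N. \<forall>x>0. (u1 i n has_real_derivative u2 i n x) (at x)"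
    and c2: "\<forall>i\<in>I. \<forall>n\<le>N. continuous_on {0<..} (u2 i n)"
    and u1_pos: "\<forall>i\<in>I. \<forall>n\<le>N. \<forall>x>0. 0 < u1 i n x"
    and u2_neg: "\<forall>i\<in>I. \<forall>n\<le>N. \<forall>x>0. u2 i n x < 0"
    and inada: "\<forall>i\<in>I. \<forall>n\<le>N. filterlim (u1 i n) at_top (at_right 0)"
    and eq: "competitive_equilibrium N \<beta> I u \<omega> pb xb"
  shows "(\<exists>D. (\<forall>m\<in>{1..N}. \<forall>n\<in>{1..N}.
              ((\<lambda>t. excess_demand N \<beta> I u \<omega> (pb(m := t)) n) has_real_derivative D m n)
                (at (pb m))) \<and>
            (\<forall>\<alpha> v. Psi I N pb u1 u2 \<omega> xb v = 0 \<longrightarrow>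
              (\<Sum>m=1..N. \<Sum>n=1..N. (\<alpha> * pb m + v m) * D m n * (\<alpha> * pb n + v n))
                = - Acoef I N pb u1 u2 \<omega> xb * \<alpha>^2 + Rfun I N pb u1 u2 \<omega> xb v * \<alpha>
                  - Sfun I N pb u1 u2 xb v + Mfun I N pb u1 u2 \<omega> xb v))
         \<and> (Acoef I N pb u1 u2 \<omega> xb > 0 \<longrightarrow> Psi I N pb u1 u2 \<omega> xb pb > 0 \<and>
              (\<forall>q::nat \<Rightarrow> real. \<exists>!(\<alpha>, v). (\<forall>n. n \<notin> {1..N} \<longrightarrow> v n = 0) \<and>
                  Psi I N pb u1 u2 \<omega> xb v = 0 \<and> (\<forall>n\<in>{1..N}. q n = \<alpha> * pb n + v n)))"
proof -
  have "regular_consumer N \<beta> (u i) (u1 i) (u2 i)" if "i \<in> I" for i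
    using that d1 d2 u1_pos u2_neg beta(1) by (simp add: regular_consumer_def regular_utility_def)
  then interpret equilibrium_economy I N \<beta> u u1 u2 \<omega> pb xb
    using finI N1 eq by (simp add: equilibrium_economy_def)
  show ?thesis
  proof (intro conjI impI exI[of _ excess_jacobian] ballI allI)
    assume "0 < Acoef I N pb u1 u2 \<omega> xb"
    then show "0 < Psi I N pb u1 u2 \<omega> xb pb"
      using Acoef_le_Psi_prices by linarith
    then show "\<exists>!(\<alpha>, v). (\<forall>n. n \<notin> {1..N} \<longrightarrow> v n = 0) \<and> Psi I N pb u1 u2 \<omega> xb v = 0
        \<and> (\<forall>n\<in>{1..N}. q n = \<alpha> * pb n + v n)" for q
      using unique_decomposition_along[where \<Phi>="Psi I N pb u1 u2 \<omega> xb" and S="{1..N}",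
          OF Psi_linear Psi_cong] by force
  qed (use excess_demand_has_derivative excess_jacobian_quadratic_form in blast)+
qed

end
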